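(* Let $\mathrm{SG}(n)$ denote the Sprague--Grundy value of a pile of $n$ tokens in the game $i\textsc{-Mark}(\{1\},\{2,3\})$. For every integer $n>1$ there exists an integer $i$ with $1\le i\le 10$ and $i\le n$ such that $\mathrm{SG}(n-i)=1$.
   Context: In the impartial game $i\textsc{-Mark}(\{1\},\{2,3\})$, played on a single pile of $n\ge0$ tokens, a move replaces $n$ by $n-1$ (if $n\ge 1$), or by $n/2$ if $n>0$ is even, or by $n/3$ if $n>0$ is divisible by $3$. The Sprague--Grundy value is defined recursively by $\mathrm{SG}(n)=\mathrm{mex}\{\mathrm{SG}(w): w \text{ an option of } n\}$, where $\mathrm{mex}(T)$ is the smallest nonnegative integer not in $T$. *)

theory Defs
  imports Main
begin

definition mex :: "nat set \<Rightarrow> nat" where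
  "mex T = (LEAST m. m \<notin> T)"

definition opts :: "nat \<Rightarrow> nat set" where
  "opts n = {w. (n \<ge> 1 \<and> w = n - 1) \<or> (n > 0 \<and> 2 dvd n \<and> w = n div 2)
                \<or> (n > 0 \<and> 3 dvd n \<and> w = n div 3)}"

lemma opts_less: "w \<in> opts n \<Longrightarrow> w < n"
  unfolding opts_def by auto

function SG :: "nat \<Rightarrow> nat" where
  "SG n = mex ((\<lambda>w. if w < n then SG w else 0) ` opts n)"
  by auto
termination by (relation "measure id") auto

declare SG.simps[simp del]

lemma SG_eq: "SG n = mex (SG ` opts n)"
proof -
  have "(\<lambda>w. if w < n then SG w else 0) ` opts n = SG ` opts n"
    using opts_less by (auto intro!: image_cong)
  then show ?thesis by (subst SG.simps) simp
qed

end

theory Submission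
  imports Defs
begin

text \<open>
  Among the positions \<open>6k+1, \<dots>, 6k+5\<close> some has SG-value 1. Otherwise
  \<open>6k+1\<close> and \<open>6k+5\<close>, having the single option \<open>6k\<close> resp. \<open>6k+4\<close>, get value 0;
  hence \<open>6k+2\<close> and \<open>6k+4\<close> have nonzero values different from 1, so they must
  have an option of value 1 outside the window, which forces
  \<open>SG(3k+1) = SG(3k+2) = 1\<close>. But \<open>3k+1\<close> is an option of \<open>3k+2\<close>. Every
  interval \<open>[n-10, n-1]\<close> with \<open>n > 11\<close> contains such a window, and for
  smaller \<open>n\<close> the position 1 itself has value 1.
\<close>

lemma finite_opts: "finite (opts n)"
  by (rule finite_subset[of _ "{..<n}"]) (auto dest: opts_less)

lemma SG_neq_option: "w \<in> opts n \<Longrightarrow> SG w \<noteq> SG n"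
proof -
  assume "w \<in> opts n"
  have "\<exists>m. m \<notin> SG ` opts n"
    using finite_opts ex_new_if_finite[of "SG ` opts n"] by (auto simp: infinite_UNIV_nat)
  then have "SG n \<notin> SG ` opts n"
    unfolding SG_eq[of n] mex_def by (rule LeastI_ex)
  with \<open>w \<in> opts n\<close> show ?thesis by (metis image_eqI)
qed

lemma SG_option_with_value: "m < SG n \<Longrightarrow> \<exists>w\<in>opts n. SG w = m"
  unfolding SG_eq[of n] mex_def using not_less_Least by blast

lemma SG_le_one_if_single_option: "opts n = {w} \<Longrightarrow> SG n \<le> 1"
  using SG_option_with_value[of 0 n] SG_option_with_value[of 1 n] by force

lemma pred_in_opts: "0 < n \<Longrightarrow> n - 1 \<in> opts n"
  unfolding opts_def by simp

lemma opts_subset_if_not_dvd_3: "\<not> 3 dvd n \<Longrightarrow> opts n \<subseteq> {n - 1, n div 2}"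
  unfolding opts_def by auto

lemma opts_if_coprime_6: "0 < n \<Longrightarrow> odd n \<Longrightarrow> \<not> 3 dvd n \<Longrightarrow> opts n = {n - 1}"
  unfolding opts_def by auto

lemma SG_one: "SG 1 = 1"
proof -
  have "opts 0 = {}" unfolding opts_def by simp
  then have "SG 0 = 0" unfolding SG_eq[of 0] mex_def by simp
  moreover have "opts 1 = {0}" by (simp add: opts_if_coprime_6)
  ultimately show ?thesis
    using SG_le_one_if_single_option SG_neq_option by (metis le_eq_less_or_eq less_one singletonI)
qed

lemma SG_one_in_window: "\<exists>t. 6*k+1 \<le> t \<and> t \<le> 6*k+5 \<and> SG t = 1"
proof (rule ccontr)
  assume "\<nexists>t. 6*k+1 \<le> t \<and> t \<le> 6*k+5 \<and> SG t = 1"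
  then have not_one: "SG (6*k+j) \<noteq> 1" if "1 \<le> j" "j \<le> 5" for j
    using that by force
  have "SG (6*k+1) \<le> 1" "SG (6*k+5) \<le> 1"
    by (rule SG_le_one_if_single_option, rule opts_if_coprime_6; presburger)+
  with not_one have zero: "SG (6*k+1) = 0" "SG (6*k+5) = 0"
    by fastforce+
  have "SG (6*k+2) \<noteq> 0"
    using SG_neq_option[OF pred_in_opts, of "6*k+2"] zero by simp
  with not_one[of 2] obtain w where w: "w \<in> opts (6*k+2)" "SG w = 1"
    using SG_option_with_value[of 1] by force
  have "opts (6*k+2) \<subseteq> {6*k+1, 3*k+1}"
  proof -
    have "\<not> 3 dvd (6*k+2)" "(6*k+2) div 2 = 3*k+1" by presburger+
    then show ?thesis using opts_subset_if_not_dvd_3[of "6*k+2"] by simp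
  qed
  with w zero have SG_3k1: "SG (3*k+1) = 1" by auto
  have "SG (6*k+4) \<noteq> 0"
    using SG_neq_option[OF pred_in_opts, of "6*k+5"] zero by (simp add: add.commute)
  with not_one[of 4] obtain v where v: "v \<in> opts (6*k+4)" "SG v = 1"
    using SG_option_with_value[of 1] by force
  have "opts (6*k+4) \<subseteq> {6*k+3, 3*k+2}"
  proof -
    have "\<not> 3 dvd (6*k+4)" "(6*k+4) div 2 = 3*k+2" by presburger+
    then show ?thesis using opts_subset_if_not_dvd_3[of "6*k+4"] by (simp add: add.commute)
  qed
  with v not_one[of 3] have "SG (3*k+2) = 1" by auto
  moreover have "3*k+1 \<in> opts (3*k+2)"
    using pred_in_opts[of "3*k+2"] by simp
  ultimately show False
    using SG_neq_option SG_3k1 by fastforce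
qed

theorem mainTheorem5:
  fixes n :: nat
  assumes "n > 1"
  shows "\<exists>i::nat. 1 \<le> i \<and> i \<le> 10 \<and> i \<le> n \<and> SG (n - i) = 1"
proof (cases "n \<le> 11")
  case True
  then show ?thesis using assms SG_one by (intro exI[of _ "n - 1"]) auto
next
  case False
  define k where "k = (n - 6) div 6"
  obtain t where t: "6*k+1 \<le> t" "t \<le> 6*k+5" "SG t = 1"
    using SG_one_in_window by blast
  have "n - 10 \<le> 6*k+1" "6*k+5 \<le> n - 1"
    using False unfolding k_def by auto
  then show ?thesis using t False by (intro exI[of _ "n - t"]) auto
qed

end
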